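(* For any preference profile with $n$ men and $n$ women, any stable matching contains at most one hell-couple.
   Context: Each of $n$ men strictly ranks the $n$ women by a bijection to $\{1,\dots,n\}$ (1 = favorite, $n$ = least favorite), and each woman strictly ranks the $n$ men likewise. A matching is a perfect pairing of men with women. A matching is stable if there is no man $M$ and woman $W$, not matched to each other, such that $M$ prefers $W$ to his partner and $W$ prefers $M$ to her partner. A hell-pair is a man and a woman who rank each other $n$ (last); a hell-couple in a matching is a hell-pair who are matched to each other. *)

theory Defs
  imports Main
begin

(* Men and women are both indexed by {0..<n}.
   mr m w = rank man m gives woman w (1 = favourite, n = least favourite);
   wr w m = rank woman w gives man m. *)

definition valid_profile :: "nat \<Rightarrow> (nat \<Rightarrow> nat \<Rightarrow> nat) \<Rightarrow> (nat \<Rightarrow> nat \<Rightarrow> nat) \<Rightarrow> bool" where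
  "valid_profile n mr wr \<longleftrightarrow>
     (\<forall>m<n. bij_betw (mr m) {0..<n} {1..n}) \<and>
     (\<forall>w<n. bij_betw (wr w) {0..<n} {1..n})"

definition is_matching :: "nat \<Rightarrow> (nat \<Rightarrow> nat) \<Rightarrow> bool" where
  "is_matching n mu \<longleftrightarrow> bij_betw mu {0..<n} {0..<n}"

definition stable_matching :: "nat \<Rightarrow> (nat \<Rightarrow> nat \<Rightarrow> nat) \<Rightarrow> (nat \<Rightarrow> nat \<Rightarrow> nat) \<Rightarrow> (nat \<Rightarrow> nat) \<Rightarrow> bool" where
  "stable_matching n mr wr mu \<longleftrightarrow> is_matching n mu \<and>
     \<not> (\<exists>m<n. \<exists>w<n. \<exists>m'<n. mu m \<noteq> w \<and> mu m' = w \<and>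
           mr m w < mr m (mu m) \<and> wr w m < wr w m')"

definition hell_pair :: "nat \<Rightarrow> (nat \<Rightarrow> nat \<Rightarrow> nat) \<Rightarrow> (nat \<Rightarrow> nat \<Rightarrow> nat) \<Rightarrow> nat \<Rightarrow> nat \<Rightarrow> bool" where
  "hell_pair n mr wr m w \<longleftrightarrow> m < n \<and> w < n \<and> mr m w = n \<and> wr w m = n"

definition hell_couples :: "nat \<Rightarrow> (nat \<Rightarrow> nat \<Rightarrow> nat) \<Rightarrow> (nat \<Rightarrow> nat \<Rightarrow> nat) \<Rightarrow> (nat \<Rightarrow> nat) \<Rightarrow> nat set" where
  "hell_couples n mr wr mu = {m. m < n \<and> hell_pair n mr wr m (mu m)}"

end

theory Submission
  imports Defs
begin

(* Two hell-couples (a, w) and (b, v) would form the blocking pair (a, v): a ranks every woman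
   other than his partner w above her, and v ranks every man other than her partner b above him. *)

lemma bij_betw_rank_less_last:
  fixes f :: "'a \<Rightarrow> nat"
  assumes "bij_betw f A {1..n}" "a \<in> A" "b \<in> A" "a \<noteq> b" "f a = n"
  shows "f b < n"
proof -
  have "f b \<in> {1..n}" using bij_betw_apply[OF assms(1) assms(3)] .
  moreover have "f b \<noteq> f a"
    using bij_betw_imp_inj_on[OF assms(1)] assms(2-4) by (auto dest: inj_onD)
  ultimately show ?thesis using assms(5) by auto
qed

lemma finite_hell_couples: "finite (hell_couples n mr wr mu)"
  by (rule finite_subset[of _ "{0..<n}"]) (auto simp: hell_couples_def)

lemma stable_matching_hell_couples_eq:
  assumes profile: "valid_profile n mr wr"
    and stable: "stable_matching n mr wr mu"
    and a: "a \<in> hell_couples n mr wr mu" and b: "b \<in> hell_couples n mr wr mu"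
  shows "a = b"
proof (rule ccontr)
  assume "a \<noteq> b"
  have ha: "a < n" "mu a < n" "mr a (mu a) = n"
    using a by (auto simp: hell_couples_def hell_pair_def)
  have hb: "b < n" "mu b < n" "wr (mu b) b = n"
    using b by (auto simp: hell_couples_def hell_pair_def)
  have "inj_on mu {0..<n}"
    using stable by (auto simp: stable_matching_def is_matching_def bij_betw_def)
  then have partners_ne: "mu a \<noteq> mu b"
    using \<open>a \<noteq> b\<close> ha hb by (auto dest: inj_onD)
  have man_prefers: "mr a (mu b) < mr a (mu a)"
    using bij_betw_rank_less_last[of "mr a" "{0..<n}" n "mu a" "mu b"] profile ha hb partners_ne
    by (simp add: valid_profile_def)
  have woman_prefers: "wr (mu b) a < wr (mu b) b"
    using bij_betw_rank_less_last[of "wr (mu b)" "{0..<n}" n b a] profile ha hb \<open>a \<noteq> b\<close>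
    by (simp add: valid_profile_def)
  show False
    using stable ha(1) hb(1,2) partners_ne man_prefers woman_prefers
    unfolding stable_matching_def by blast
qed

theorem mainTheorem6:
  fixes n :: nat and mr wr :: "nat \<Rightarrow> nat \<Rightarrow> nat" and mu :: "nat \<Rightarrow> nat"
  assumes "valid_profile n mr wr"
    and "stable_matching n mr wr mu"
  shows "card (hell_couples n mr wr mu) \<le> 1"
  using stable_matching_hell_couples_eq[OF assms] finite_hell_couples
  by (simp add: card_le_Suc0_iff_eq)

end
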